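(* Let $r_1,r_3,L>0$. For $r_2>\max(r_1,r_3)$, let $m(y)=r_1\mathbf 1_{y<0}+r_2\mathbf 1_{0\le y<1}+r_3\mathbf 1_{y\ge1}$ and let $\lambda_1(r_2)=\sup\{\lambda : \exists\,\varphi\in W^{2,1}_{\mathrm{loc}}(\mathbb{R}),\ \varphi>0,\ L^{-2}\varphi''+(m+\lambda)\varphi\le0\}$. Let $\underline{L}(r_2)=0$ if $r_1=r_3$ and $\underline{L}(r_2)=\frac{1}{\sqrt{r_2-\max(r_1,r_3)}}\operatorname{arccot}\big(\sqrt{\frac{r_2-\max(r_1,r_3)}{|r_1-r_3|}}\big)$ if $r_1\ne r_3$, and let $\underline{r_2}\ge\max(r_1,r_3)$ be the threshold such that $L>\underline{L}(r_2)$ for all $r_2>\underline{r_2}$ and $L<\underline{L}(r_2)$ for all $r_2\in(\max(r_1,r_3),\underline{r_2})$. Then the map $r_2\in(\max(r_1,r_3),+\infty)\mapsto\lambda_1(r_2)$ is continuous, constant on $(\max(r_1,r_3),\underline{r_2}]$ (possibly empty), decreasing on $(\underline{r_2},+\infty)$, and satisfies $\lambda_1(r_2)\to-\max(r_1,r_3)$ as $r_2\to\max(r_1,r_3)$ and $\lambda_1(r_2)\to-\infty$ as $r_2\to+\infty$.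
   Context: $\operatorname{arccot}$ denotes the inverse of $\cot|_{(0,\pi)}$. *)

theory Defs
  imports "HOL-Analysis.Analysis"
begin

text \<open>arccot = inverse of cot restricted to (0,pi).\<close>
definition arccot :: "real \<Rightarrow> real" where
  "arccot y = pi / 2 - arctan y"

definition mfun :: "real \<Rightarrow> real \<Rightarrow> real \<Rightarrow> real \<Rightarrow> real" where
  "mfun r1 r2 r3 y = (if y < 0 then r1 else if y < 1 then r2 else r3)"

text \<open>phi is in W^{2,1}_loc(R) with (classical) derivative phi' and weak second
  derivative phi'': phi is differentiable everywhere with derivative phi',
  phi'' is Lebesgue integrable on every compact interval and phi' is the
  indefinite integral of phi''.\<close>
definition W21loc :: "(real \<Rightarrow> real) \<Rightarrow> (real \<Rightarrow> real) \<Rightarrow> (real \<Rightarrow> real) \<Rightarrow> bool" where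
  "W21loc \<phi> \<phi>' \<phi>'' \<longleftrightarrow>
     (\<forall>x. (\<phi> has_real_derivative \<phi>' x) (at x)) \<and>
     (\<forall>a b. set_integrable lborel {a..b} \<phi>'') \<and>
     (\<forall>a b. a \<le> b \<longrightarrow> \<phi>' b - \<phi>' a = (LINT t:{a..b}|lborel. \<phi>'' t))"

definition lambda1 :: "real \<Rightarrow> real \<Rightarrow> real \<Rightarrow> real \<Rightarrow> real" where
  "lambda1 L r1 r3 r2 = Sup {lam. \<exists>\<phi> \<phi>' \<phi>''. W21loc \<phi> \<phi>' \<phi>'' \<and> (\<forall>x. \<phi> x > 0) \<and>
      (AE x in lborel. \<phi>'' x / L\<^sup>2 + (mfun r1 r2 r3 x + lam) * \<phi> x \<le> 0)}"

definition Lunder :: "real \<Rightarrow> real \<Rightarrow> real \<Rightarrow> real" where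
  "Lunder r1 r3 r2 = (if r1 = r3 then 0 else
      1 / sqrt (r2 - max r1 r3) * arccot (sqrt ((r2 - max r1 r3) / \<bar>r1 - r3\<bar>)))"

end

theory Submission
  imports Defs
begin

text \<open>A positive supersolution \<open>\<phi>\<close> of \<open>\<phi>''/L\<^sup>2 + (m + \<lambda>) \<phi> \<le> 0\<close> cannot be touched from below
  by a positive Dirichlet subsolution with eigenvalue \<open>\<rho> < \<lambda>\<close>: slide the subsolution up to the first
  contact point and compare second derivatives there. Hence every such subsolution bounds
  \<open>\<lambda>\<^sub>1\<close> from above, while explicit supersolutions bound it from below.

  For \<open>- \<nu>\<close> both are glued \<open>C\<^sup>1\<close> from a cosine \<open>cos (\<kappa> y - \<theta>)\<close> on \<open>[0, 1]\<close> and exponentials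
  on the two half-lines, where \<open>\<kappa> = L \<surd>(r2 - \<nu>)\<close> and \<open>\<alpha>\<^sub>i = L \<surd>(\<nu> - r\<^sub>i)\<close>. A supersolution
  exists iff the phase \<open>\<kappa>\<close> fits into \<open>arctan (\<alpha>\<^sub>1/\<kappa>) + arctan (\<alpha>\<^sub>3/\<kappa>)\<close>, and a
  subsolution if it does not (or if \<open>\<kappa> \<ge> pi\<close>). So \<open>\<lambda>\<^sub>1 = - \<nu>\<^sub>1\<close>, where \<open>\<nu>\<^sub>1\<close> is the zero of the
  secular function \<open>\<kappa> - arctan (\<alpha>\<^sub>1/\<kappa>) - arctan (\<alpha>\<^sub>3/\<kappa>)\<close> above \<open>max r1 r3\<close>, or
  \<open>max r1 r3\<close> itself if there is none. The secular function decreases in \<open>\<nu>\<close>, increases in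
  \<open>r2\<close>, and at \<open>\<nu> = max r1 r3\<close> has the sign of \<open>L - Lunder r1 r3 r2\<close>; all claims follow.\<close>

section \<open>Functions glued at the jumps of \<open>m\<close>\<close>

definition glue :: "real \<Rightarrow> (real \<Rightarrow> real) \<Rightarrow> (real \<Rightarrow> real) \<Rightarrow> real \<Rightarrow> real" where
  "glue c f g x = (if x < c then f x else g x)"

abbreviation glue3 :: "(real \<Rightarrow> real) \<Rightarrow> (real \<Rightarrow> real) \<Rightarrow> (real \<Rightarrow> real) \<Rightarrow> real \<Rightarrow> real" where
  "glue3 f1 f2 f3 \<equiv> glue 0 f1 (glue 1 f2 f3)"

lemma mfun_eq_glue3: "mfun r1 r2 r3 = glue3 (\<lambda>_. r1) (\<lambda>_. r2) (\<lambda>_. r3)"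
  by (simp add: fun_eq_iff mfun_def glue_def)

lemma has_real_derivative_glue_off:
  assumes "x \<noteq> c" and "(f has_real_derivative f' x) (at x)" and "(g has_real_derivative g' x) (at x)"
  shows "(glue c f g has_real_derivative glue c f' g' x) (at x)"
proof (cases "x < c")
  case True
  then have "(glue c f g has_real_derivative f' x) (at x)"
    by (intro has_field_derivative_transform_within_open[OF assms(2), of "{..<c}"])
      (auto simp: glue_def)
  then show ?thesis using True by (simp add: glue_def)
next
  case False
  then have "c < x" using assms(1) by simp
  then have "(glue c f g has_real_derivative g' x) (at x)"
    by (intro has_field_derivative_transform_within_open[OF assms(3), of "{c<..}"])
      (auto simp: glue_def)
  then show ?thesis using False by (simp add: glue_def)
qed

lemma has_real_derivative_glue_at:
  assumes f: "(f has_real_derivative D) (at c)" and g: "(g has_real_derivative D) (at c)"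
    and fg: "f c = g c"
  shows "(glue c f g has_real_derivative D) (at c)"
proof -
  have "(glue c f g has_real_derivative D) (at c within {..c})"
    by (rule has_field_derivative_transform_within[OF has_field_derivative_at_within[OF f], of 1])
      (auto simp: glue_def fg)
  moreover have "(glue c f g has_real_derivative D) (at c within {c..})"
    by (rule has_field_derivative_transform_within[OF has_field_derivative_at_within[OF g], of 1])
      (auto simp: glue_def)
  ultimately have "(glue c f g has_real_derivative D) (at c within {..c} \<union> {c..})"
    unfolding has_field_derivative_iff Lim_within_Un by blast
  moreover have "{..c} \<union> {c..} = (UNIV :: real set)" by auto
  ultimately show ?thesis by simp
qed

lemma has_real_derivative_glue:
  assumes "\<And>x. (f has_real_derivative f' x) (at x)" and "\<And>x. (g has_real_derivative g' x) (at x)"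
    and "f c = g c" and "f' c = g' c"
  shows "(glue c f g has_real_derivative glue c f' g' x) (at x)"
proof (cases "x = c")
  case True
  have "(glue c f g has_real_derivative g' c) (at c)"
    by (rule has_real_derivative_glue_at) (use assms(1)[of c] assms(2-4) in simp_all)
  then show ?thesis using True by (simp add: glue_def)
qed (use has_real_derivative_glue_off assms in blast)

lemma has_real_derivative_glue_right:
  assumes f: "(f has_real_derivative f' x) (at x within {x..})"
    and g: "(g has_real_derivative g' x) (at x within {x..})"
  shows "(glue c f g has_real_derivative glue c f' g' x) (at x within {x..})"
proof (cases "x < c")
  case True
  then have "(glue c f g has_real_derivative f' x) (at x within {x..})"
    by (intro has_field_derivative_transform_within[OF f, of "c - x"])
      (auto simp: glue_def dist_real_def)
  then show ?thesis using True by (simp add: glue_def)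
next
  case False
  then have "(glue c f g has_real_derivative g' x) (at x within {x..})"
    by (intro has_field_derivative_transform_within[OF g, of 1]) (auto simp: glue_def)
  then show ?thesis using False by (simp add: glue_def)
qed

lemma continuous_on_glue:
  assumes "continuous_on UNIV f" and "continuous_on UNIV g" and "f c = g c"
  shows "continuous_on UNIV (glue c f g)"
proof -
  have "glue c f g = (\<lambda>x. if x \<le> c then f x else g x)"
    using assms(3) by (auto simp: fun_eq_iff glue_def)
  moreover have "continuous_on UNIV (\<lambda>x. if id x \<le> c then f x else g x)"
    by (rule continuous_on_cases_le) (auto intro: continuous_on_subset[OF assms(1)]
        continuous_on_subset[OF assms(2)] continuous_on_id simp: assms(3))
  ultimately show ?thesis by simp
qed

lemma continuous_at_right_glue:
  assumes "continuous (at_right x) f" and "continuous (at_right x) g"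
  shows "continuous (at_right x) (glue c f g)"
proof (cases "x < c")
  case True
  have "eventually (\<lambda>y. f y = glue c f g y) (at_right x)"
    unfolding eventually_at_right_field using True by (auto simp: glue_def intro!: exI[of _ c])
  then show ?thesis
    using assms(1) True unfolding continuous_within glue_def[of c f g x]
    by (simp add: tendsto_cong)
next
  case False
  have "eventually (\<lambda>y. g y = glue c f g y) (at_right x)"
    unfolding eventually_at_right_field using False by (auto simp: glue_def intro!: exI[of _ "x + 1"])
  then show ?thesis
    using assms(2) False unfolding continuous_within glue_def[of c f g x]
    by (simp add: tendsto_cong)
qed

lemma continuous_at_right_mfun: "continuous (at_right x) (mfun r1 r2 r3)"
  unfolding mfun_eq_glue3 by (intro continuous_at_right_glue continuous_const)

lemma set_integrable_mult_indicator:
  fixes f :: "real \<Rightarrow> real"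
  assumes "set_integrable lborel A f" and "B \<in> sets lborel"
  shows "set_integrable lborel A (\<lambda>x. indicator B x * f x)"
  using integrable_mult_indicator[OF assms(2) assms(1)[unfolded set_integrable_def]]
  unfolding set_integrable_def by (simp add: mult.left_commute)

lemma set_integrable_glue:
  fixes f g :: "real \<Rightarrow> real"
  assumes "set_integrable lborel A f" and "set_integrable lborel A g"
  shows "set_integrable lborel A (glue c f g)"
proof -
  have "glue c f g = (\<lambda>x. indicator {..<c} x * f x + indicator {c..} x * g x)"
    by (auto simp: fun_eq_iff glue_def indicator_def)
  then show ?thesis
    using assms by (simp add: set_integrable_mult_indicator)
qed

lemma W21locI:
  assumes "\<And>x. (\<phi> has_real_derivative \<phi>' x) (at x)" and "continuous_on UNIV \<phi>'"
    and "finite S" and "\<And>x. x \<notin> S \<Longrightarrow> (\<phi>' has_real_derivative \<phi>'' x) (at x)"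
    and "\<And>a b. set_integrable lborel {a..b} \<phi>''"
  shows "W21loc \<phi> \<phi>' \<phi>''"
  unfolding W21loc_def
proof (intro conjI allI impI)
  fix a b :: real
  assume "a \<le> b"
  then have "(\<phi>'' has_integral (\<phi>' b - \<phi>' a)) {a..b}"
    using assms(2-4) by (intro fundamental_theorem_of_calculus_strong[of S])
      (auto simp: has_real_derivative_iff_has_vector_derivative[symmetric]
        intro: continuous_on_subset)
  then show "\<phi>' b - \<phi>' a = (LINT t:{a..b}|lborel. \<phi>'' t)"
    using set_borel_integral_eq_integral(2)[OF assms(5)] by (simp add: integral_unique)
qed (use assms in auto)

lemma W21loc_glue3:
  assumes "\<And>x. (f1 has_real_derivative f1' x) (at x)" "\<And>x. (f1' has_real_derivative f1'' x) (at x)"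
    and "\<And>x. (f2 has_real_derivative f2' x) (at x)" "\<And>x. (f2' has_real_derivative f2'' x) (at x)"
    and "\<And>x. (f3 has_real_derivative f3' x) (at x)" "\<And>x. (f3' has_real_derivative f3'' x) (at x)"
    and "continuous_on UNIV f1''" "continuous_on UNIV f2''" "continuous_on UNIV f3''"
    and "f1 0 = f2 0" "f1' 0 = f2' 0" "f2 1 = f3 1" "f2' 1 = f3' 1"
  shows "W21loc (glue3 f1 f2 f3) (glue3 f1' f2' f3') (glue3 f1'' f2'' f3'')"
proof (rule W21locI[of _ _ "{0, 1}"])
  fix x :: real
  show "(glue3 f1 f2 f3 has_real_derivative glue3 f1' f2' f3' x) (at x)"
    using assms(1,3,5,10-13) by (intro has_real_derivative_glue) (auto simp: glue_def)
  show "x \<notin> {0, 1} \<Longrightarrow> (glue3 f1' f2' f3' has_real_derivative glue3 f1'' f2'' f3'' x) (at x)"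
    using assms(2,4,6) by (intro has_real_derivative_glue_off) auto
next
  have "continuous_on UNIV f" if "\<And>x. (f has_real_derivative f' x) (at x)" for f f' :: "real \<Rightarrow> real"
    using that by (meson DERIV_isCont continuous_at_imp_continuous_on)
  then show "continuous_on UNIV (glue3 f1' f2' f3')"
    using assms(2,4,6,11,13) by (intro continuous_on_glue) (auto simp: glue_def)
  fix a b :: real
  have "set_integrable lborel {a..b} f" if "continuous_on UNIV f" for f :: "real \<Rightarrow> real"
    by (rule borel_integrable_atLeastAtMost') (rule continuous_on_subset[OF that], simp)
  then show "set_integrable lborel {a..b} (glue3 f1'' f2'' f3'')"
    using assms(7-9) by (intro set_integrable_glue) auto
qed simp

section \<open>Comparison with Dirichlet subsolutions\<close>

definition admissible :: "real \<Rightarrow> (real \<Rightarrow> real) \<Rightarrow> real \<Rightarrow> bool" where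
  "admissible L m lam \<longleftrightarrow> (\<exists>\<phi> \<phi>' \<phi>''. W21loc \<phi> \<phi>' \<phi>'' \<and> (\<forall>x. 0 < \<phi> x) \<and>
      (AE x in lborel. \<phi>'' x / L\<^sup>2 + (m x + lam) * \<phi> x \<le> 0))"

lemma lambda1_eq_Sup_admissible: "lambda1 L r1 r3 r2 = Sup {lam. admissible L (mfun r1 r2 r3) lam}"
  unfolding lambda1_def admissible_def ..

text \<open>Only a right derivative \<open>\<psi>''\<close> of \<open>\<psi>'\<close> is required, so that \<open>\<psi>\<close> may be glued
  \<open>C\<^sup>1\<close> from pieces at the jumps of \<open>m\<close>.\<close>
definition dirichlet_subsolution ::
    "real \<Rightarrow> (real \<Rightarrow> real) \<Rightarrow> real \<Rightarrow> real \<Rightarrow> real \<Rightarrow> (real \<Rightarrow> real) \<Rightarrow> (real \<Rightarrow> real) \<Rightarrow> (real \<Rightarrow> real) \<Rightarrow> bool"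
  where
  "dirichlet_subsolution L m \<rho> a b \<psi> \<psi>' \<psi>'' \<longleftrightarrow>
     a < b \<and> continuous_on {a..b} \<psi> \<and> \<psi> a = 0 \<and> \<psi> b = 0 \<and>
     (\<forall>x\<in>{a<..<b}. 0 < \<psi> x \<and> (\<psi> has_real_derivative \<psi>' x) (at x) \<and>
        (\<psi>' has_real_derivative \<psi>'' x) (at x within {x..}) \<and>
        0 \<le> \<psi>'' x / L\<^sup>2 + (m x + \<rho>) * \<psi> x)"

lemma exists_touching_multiple:
  fixes \<phi> \<psi> :: "real \<Rightarrow> real"
  assumes "a < b" and "continuous_on {a..b} \<phi>" and "\<And>x. x \<in> {a..b} \<Longrightarrow> 0 < \<phi> x"
    and "continuous_on {a..b} \<psi>" and "\<psi> a = 0" and "\<psi> b = 0"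
    and "\<And>x. x \<in> {a<..<b} \<Longrightarrow> 0 < \<psi> x"
  shows "\<exists>t>0. \<exists>x0\<in>{a<..<b}. (\<forall>x\<in>{a..b}. t * \<psi> x \<le> \<phi> x) \<and> t * \<psi> x0 = \<phi> x0"
proof -
  have "continuous_on {a..b} (\<lambda>x. \<psi> x / \<phi> x)"
    using assms(2-4) by (intro continuous_intros) (auto simp: less_imp_neq[symmetric])
  then obtain x0 where x0: "x0 \<in> {a..b}" and max: "\<And>x. x \<in> {a..b} \<Longrightarrow> \<psi> x / \<phi> x \<le> \<psi> x0 / \<phi> x0"
    using continuous_attains_sup[OF compact_Icc, of a b "\<lambda>x. \<psi> x / \<phi> x"] assms(1) by auto
  have "0 < \<psi> ((a + b) / 2) / \<phi> ((a + b) / 2)"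
    using assms(1,3,7) by simp
  then have pos: "0 < \<psi> x0 / \<phi> x0"
    using max[of "(a + b) / 2"] assms(1) by simp
  then have "x0 \<in> {a<..<b}"
    using x0 assms(5,6) by (cases "x0 = a \<or> x0 = b") auto
  moreover have "\<phi> x0 / \<psi> x0 * \<psi> x \<le> \<phi> x" if "x \<in> {a..b}" for x
    using max[OF that] pos assms(3)[OF that] assms(3)[OF x0]
    by (simp add: field_simps zero_less_divide_iff)
  moreover have "\<phi> x0 / \<psi> x0 * \<psi> x0 = \<phi> x0" "0 < \<phi> x0 / \<psi> x0"
    using pos by (auto simp: zero_less_divide_iff)
  ultimately show ?thesis by blast
qed

lemma W21loc_right_increment_le:
  assumes W: "W21loc \<phi> \<phi>' \<phi>''" and AE: "AE x in lborel. \<phi>'' x \<le> g x"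
    and g: "continuous (at_right x0) g" and B: "g x0 < B"
  shows "eventually (\<lambda>y. \<phi>' y - \<phi>' x0 \<le> B * (y - x0)) (at_right x0)"
proof -
  have "eventually (\<lambda>y. g y < B) (at_right x0)"
    using order_tendstoD(2)[OF g[unfolded continuous_within] B] .
  then obtain c where c: "x0 < c" "\<And>y. x0 < y \<Longrightarrow> y < c \<Longrightarrow> g y < B"
    unfolding eventually_at_right_field by blast
  have "\<phi>' y - \<phi>' x0 \<le> B * (y - x0)" if y: "x0 < y" "y < c" for y
  proof -
    have "AE t\<in>{x0..y} in lborel. \<phi>'' t \<le> B"
      using AE by eventually_elim (use B c y in \<open>force simp: le_less\<close>)
    moreover have "set_integrable lborel {x0..y} (\<lambda>_. B)"
      by (rule borel_integrable_atLeastAtMost') (rule continuous_on_const)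
    ultimately have "(LINT t:{x0..y}|lborel. \<phi>'' t) \<le> (LINT t:{x0..y}|lborel. B)"
      using W unfolding W21loc_def by (intro set_integral_mono_AE) auto
    then show ?thesis
      using W y unfolding W21loc_def by (simp add: set_integral_const mult.commute)
  qed
  then show ?thesis
    unfolding eventually_at_right_field using c(1) by blast
qed

lemma has_real_derivative_right_increment_ge:
  assumes "(f has_real_derivative D) (at x within {x..})" and "C < D"
  shows "eventually (\<lambda>y. C * (y - x) \<le> f y - f x) (at_right x)"
proof -
  have "((\<lambda>y. (f y - f x) / (y - x)) \<longlongrightarrow> D) (at_right x)"
    using assms(1) unfolding has_field_derivative_iff by (rule tendsto_within_subset) auto
  then have "eventually (\<lambda>y. C < (f y - f x) / (y - x)) (at_right x)"
    using assms(2) by (rule order_tendstoD(1))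
  moreover have "eventually (\<lambda>y. x < y) (at_right x)"
    by (simp add: eventually_at_right_less)
  ultimately show ?thesis
    by eventually_elim (simp add: less_divide_eq less_imp_le)
qed

lemma divide_square_add_nonpos_iff:
  fixes L u w :: real
  assumes "0 < L"
  shows "u / L\<^sup>2 + w \<le> 0 \<longleftrightarrow> u \<le> - L\<^sup>2 * w"
  using assms by (simp add: field_simps) linarith

lemma divide_square_add_nonneg_iff:
  fixes L u w :: real
  assumes "0 < L"
  shows "0 \<le> u / L\<^sup>2 + w \<longleftrightarrow> - L\<^sup>2 * w \<le> u"
  using assms by (simp add: field_simps) linarith

lemma eventually_less_at_right_of_neg_deriv:
  fixes v :: "real \<Rightarrow> real"
  assumes ev: "eventually (\<lambda>y. (v has_real_derivative v' y) (at y) \<and> v' y < 0) (at_right x0)"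
    and cont: "isCont v x0"
  shows "eventually (\<lambda>y. v y < v x0) (at_right x0)"
proof -
  obtain c where c: "x0 < c" "\<And>y. x0 < y \<Longrightarrow> y < c \<Longrightarrow> (v has_real_derivative v' y) (at y) \<and> v' y < 0"
    using ev unfolding eventually_at_right_field by blast
  have "v y < v x0" if y: "x0 < y" "y < c" for y
  proof (rule DERIV_neg_imp_decreasing_open[OF y(1)])
    show "\<exists>d. (v has_real_derivative d) (at z) \<and> d < 0" if "x0 < z" "z < y" for z
      using c(2) that y by fastforce
    have "isCont v z" if "z \<in> {x0..y}" for z
      using that cont c(2)[of z] y DERIV_isCont by (cases "z = x0") force+
    then show "continuous_on {x0..y} v"
      by (rule continuous_at_imp_continuous_on[OF ballI])
  qed
  then show ?thesis
    unfolding eventually_at_right_field using c(1) by blast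
qed

text \<open>At a point where \<open>t \<psi>\<close> touches \<open>\<phi>\<close> from below, the curvature gap makes
  \<open>\<phi>' - t \<psi>'\<close> negative immediately to the right, so \<open>\<phi> - t \<psi>\<close> would become negative.\<close>
lemma no_touching_with_curvature_gap:
  assumes W: "W21loc \<phi> \<phi>' \<phi>''" and AE: "AE x in lborel. \<phi>'' x \<le> g x"
    and g: "continuous (at_right x0) g" and x0: "x0 \<in> {a<..<b}"
    and \<psi>d: "\<And>x. x \<in> {a<..<b} \<Longrightarrow> (\<psi> has_real_derivative \<psi>' x) (at x)"
    and \<psi>2: "(\<psi>' has_real_derivative \<psi>'' x0) (at x0 within {x0..})"
    and t: "0 < t" and below: "\<And>x. x \<in> {a<..<b} \<Longrightarrow> t * \<psi> x \<le> \<phi> x"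
    and touch: "t * \<psi> x0 = \<phi> x0" and gap: "g x0 < t * \<psi>'' x0"
  shows False
proof -
  define v where "v x = \<phi> x - t * \<psi> x" for x
  define v' where "v' x = \<phi>' x - t * \<psi>' x" for x
  have vd: "(v has_real_derivative v' x) (at x)" if "x \<in> {a<..<b}" for x
    unfolding v_def v'_def using W \<psi>d[OF that]
    by (auto simp: W21loc_def intro!: derivative_eq_intros)
  have "v' x0 = 0"
  proof (rule DERIV_local_min[OF vd[OF x0]])
    show "0 < min (x0 - a) (b - x0)" using x0 by simp
    show "\<forall>y. \<bar>x0 - y\<bar> < min (x0 - a) (b - x0) \<longrightarrow> v x0 \<le> v y"
      using below touch x0 by (auto simp: v_def abs_if)
  qed
  define \<delta> where "\<delta> = (t * \<psi>'' x0 - g x0) / 3"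
  have \<delta>: "0 < \<delta>" using gap by (simp add: \<delta>_def)
  have "eventually (\<lambda>y. \<phi>' y - \<phi>' x0 \<le> (g x0 + \<delta>) * (y - x0)) (at_right x0)"
    using W AE g \<delta> by (intro W21loc_right_increment_le) auto
  moreover have "eventually (\<lambda>y. (\<psi>'' x0 - \<delta> / t) * (y - x0) \<le> \<psi>' y - \<psi>' x0) (at_right x0)"
    using \<psi>2 \<delta> t by (intro has_real_derivative_right_increment_ge) auto
  moreover have "eventually (\<lambda>y. y \<in> {a<..<b} \<and> x0 < y) (at_right x0)"
    unfolding eventually_at_right_field using x0 by auto
  ultimately have "eventually (\<lambda>y. (v has_real_derivative v' y) (at y) \<and> v' y < 0) (at_right x0)"
  proof eventually_elim
    case (elim y)
    have "v' y = (\<phi>' y - \<phi>' x0) - t * (\<psi>' y - \<psi>' x0)"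
      using \<open>v' x0 = 0\<close> by (simp add: v'_def algebra_simps)
    also have "\<dots> \<le> (g x0 + \<delta>) * (y - x0) - t * ((\<psi>'' x0 - \<delta> / t) * (y - x0))"
      using elim t by (intro diff_mono mult_left_mono) auto
    also have "\<dots> = - \<delta> * (y - x0)"
      using t by (simp add: \<delta>_def field_simps)
    also have "\<dots> < 0"
      using \<delta> elim by simp
    finally show ?case using elim vd by simp
  qed
  then have "eventually (\<lambda>y. v y < v x0) (at_right x0)"
    using DERIV_isCont[OF vd[OF x0]] by (rule eventually_less_at_right_of_neg_deriv)
  moreover have "eventually (\<lambda>y. y \<in> {a<..<b}) (at_right x0)"
    unfolding eventually_at_right_field using x0 by auto
  ultimately have "eventually (\<lambda>_. False) (at_right x0)"
  proof eventually_elim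
    case (elim y)
    then show ?case
      using below[of y] touch by (simp add: v_def)
  qed
  then show False by simp
qed

lemma admissible_le_dirichlet_subsolution:
  assumes adm: "admissible L m lam" and L: "0 < L" and m: "\<And>x. continuous (at_right x) m"
    and sub: "dirichlet_subsolution L m \<rho> a b \<psi> \<psi>' \<psi>''"
  shows "lam \<le> \<rho>"
proof (rule ccontr)
  assume "\<not> lam \<le> \<rho>"
  obtain \<phi> \<phi>' \<phi>'' where W: "W21loc \<phi> \<phi>' \<phi>''" and pos: "\<And>x. 0 < \<phi> x"
    and AE: "AE x in lborel. \<phi>'' x / L\<^sup>2 + (m x + lam) * \<phi> x \<le> 0"
    using adm unfolding admissible_def by blast
  have \<psi>: "a < b" "continuous_on {a..b} \<psi>" "\<psi> a = 0" "\<psi> b = 0"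
    and \<psi>x: "\<And>x. x \<in> {a<..<b} \<Longrightarrow> 0 < \<psi> x \<and> (\<psi> has_real_derivative \<psi>' x) (at x) \<and>
        (\<psi>' has_real_derivative \<psi>'' x) (at x within {x..}) \<and> - L\<^sup>2 * ((m x + \<rho>) * \<psi> x) \<le> \<psi>'' x"
    using sub unfolding dirichlet_subsolution_def divide_square_add_nonneg_iff[OF L] by blast+
  have "continuous_on {a..b} \<phi>"
    using W unfolding W21loc_def by (meson DERIV_isCont continuous_at_imp_continuous_on)
  then obtain t x0 where t: "0 < t" and x0: "x0 \<in> {a<..<b}"
    and below: "\<And>x. x \<in> {a..b} \<Longrightarrow> t * \<psi> x \<le> \<phi> x" and touch: "t * \<psi> x0 = \<phi> x0"
    using exists_touching_multiple[OF \<psi>(1) _ _ \<psi>(2-4)] \<psi>x pos by blast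
  define g where "g x = - L\<^sup>2 * (m x + lam) * \<phi> x" for x
  have AE_g: "AE x in lborel. \<phi>'' x \<le> g x"
    using AE by eventually_elim (simp add: divide_square_add_nonpos_iff[OF L] g_def mult.assoc)
  have g_cont: "continuous (at_right x0) g"
    using W continuous_at_imp_continuous_at_within[OF DERIV_isCont] unfolding g_def W21loc_def
    by (intro continuous_intros m) blast
  have gap: "g x0 < t * \<psi>'' x0"
  proof -
    have "g x0 < - L\<^sup>2 * ((m x0 + \<rho>) * (t * \<psi> x0))"
      using \<open>\<not> lam \<le> \<rho>\<close> L pos[of x0] by (simp add: g_def touch algebra_simps)
    also have "\<dots> \<le> t * \<psi>'' x0"
      using mult_left_mono[OF \<psi>x[OF x0, THEN conjunct2, THEN conjunct2, THEN conjunct2] less_imp_le[OF t]]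
      by (simp add: algebra_simps)
    finally show ?thesis .
  qed
  show False
    by (rule no_touching_with_curvature_gap[where \<psi> = \<psi> and \<psi>' = \<psi>' and \<psi>'' = \<psi>'' and t = t,
          OF W AE_g g_cont x0]) (use \<psi>x[OF x0] \<psi>x below t touch gap in auto)
qed

lemma dirichlet_subsolution_sine:
  assumes L: "0 < L" and l: "0 < l" and m: "\<And>x. x \<in> {a<..<a + l} \<Longrightarrow> c \<le> m x"
  shows "dirichlet_subsolution L m ((pi / (L * l))\<^sup>2 - c) a (a + l)
    (\<lambda>x. sin (pi / l * (x - a))) (\<lambda>x. pi / l * cos (pi / l * (x - a)))
    (\<lambda>x. - (pi / l)\<^sup>2 * sin (pi / l * (x - a)))"
  unfolding dirichlet_subsolution_def
proof (intro conjI ballI)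
  fix x assume x: "x \<in> {a<..<a + l}"
  have "pi / l * (x - a) < pi / l * l"
    using x l by (intro mult_strict_left_mono) auto
  then have "0 < pi / l * (x - a)" "pi / l * (x - a) < pi"
    using x l by auto
  then show s: "0 < sin (pi / l * (x - a))" by (rule sin_gt_zero)
  show "((\<lambda>x. sin (pi / l * (x - a))) has_real_derivative pi / l * cos (pi / l * (x - a))) (at x)"
    using l by (auto intro!: derivative_eq_intros)
  show "((\<lambda>x. pi / l * cos (pi / l * (x - a))) has_real_derivative
      - (pi / l)\<^sup>2 * sin (pi / l * (x - a))) (at x within {x..})"
    using l by (auto intro!: derivative_eq_intros simp: power2_eq_square)
  have "- (pi / l)\<^sup>2 * sin (pi / l * (x - a)) / L\<^sup>2 + (m x + ((pi / (L * l))\<^sup>2 - c)) * sin (pi / l * (x - a))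
      = (m x - c) * sin (pi / l * (x - a))"
    using L l by (simp add: field_simps power2_eq_square)
  also have "0 \<le> \<dots>" using m[OF x] s by simp
  finally show "0 \<le> - (pi / l)\<^sup>2 * sin (pi / l * (x - a)) / L\<^sup>2 + (m x + ((pi / (L * l))\<^sup>2 - c)) * sin (pi / l * (x - a))" .
qed (use l in \<open>auto intro!: continuous_intros\<close>)

lemma admissible_le_of_interval:
  assumes "admissible L m lam" and "0 < L" and "\<And>x. continuous (at_right x) m"
    and "0 < l" and "\<And>x. x \<in> {a<..<a + l} \<Longrightarrow> c \<le> m x"
  shows "lam \<le> (pi / (L * l))\<^sup>2 - c"
  using admissible_le_dirichlet_subsolution[OF assms(1-3) dirichlet_subsolution_sine[OF assms(2,4,5)]] .

lemma admissible_le_of_long_intervals: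
  assumes adm: "admissible L m lam" and L: "0 < L" and m: "\<And>x. continuous (at_right x) m"
    and long: "\<And>l. 0 < l \<Longrightarrow> \<exists>a. \<forall>x\<in>{a<..<a + l}. c \<le> m x"
  shows "lam \<le> - c"
proof (rule ccontr)
  assume "\<not> lam \<le> - c"
  define e where "e = (lam + c) / 2"
  define l where "l = pi / (L * sqrt e)"
  have e: "0 < e" using \<open>\<not> lam \<le> - c\<close> by (simp add: e_def)
  then have l: "0 < l" using L by (simp add: l_def)
  obtain a where "\<forall>x\<in>{a<..<a + l}. c \<le> m x" using long[OF l] by blast
  then have "lam \<le> (pi / (L * l))\<^sup>2 - c"
    using admissible_le_of_interval[OF adm L m l] by blast
  also have "(pi / (L * l))\<^sup>2 = e"
    using L e by (simp add: l_def power_divide power_mult_distrib)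
  finally show False using \<open>\<not> lam \<le> - c\<close> by (simp add: e_def)
qed

lemma admissible_mfun_le_neg_max:
  assumes "admissible L (mfun r1 r2 r3) lam" and "0 < L"
  shows "lam \<le> - max r1 r3"
proof -
  have "lam \<le> - r1"
  proof (rule admissible_le_of_long_intervals[OF assms continuous_at_right_mfun])
    fix l :: real assume "0 < l"
    show "\<exists>a. \<forall>x\<in>{a<..<a + l}. r1 \<le> mfun r1 r2 r3 x"
      by (rule exI[of _ "- l"]) (simp add: mfun_def)
  qed
  moreover have "lam \<le> - r3"
    by (rule admissible_le_of_long_intervals[OF assms continuous_at_right_mfun])
      (force simp: mfun_def intro: exI[of _ 1])
  ultimately show ?thesis by simp
qed

lemma admissible_mfun_le_middle:
  assumes "admissible L (mfun r1 r2 r3) lam" and "0 < L"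
  shows "lam \<le> (pi / L)\<^sup>2 - r2"
  using admissible_le_of_interval[OF assms continuous_at_right_mfun, of 1 0 r2]
  by (simp add: mfun_def)

section \<open>Three-zone supersolutions and subsolutions\<close>

lemma cos_phase_pos:
  assumes "0 \<le> \<kappa>" and "\<theta> < pi / 2" and "\<kappa> - \<theta> < pi / 2" and "0 \<le> x" and "x \<le> 1"
  shows "0 < cos (\<kappa> * x - \<theta>)"
proof (rule cos_gt_zero_pi)
  have "0 \<le> \<kappa> * x" "\<kappa> * x \<le> \<kappa>"
    using assms by (simp_all add: mult_left_le)
  then show "- (pi / 2) < \<kappa> * x - \<theta>" "\<kappa> * x - \<theta> < pi / 2"
    using assms(2,3) by linarith+
qed

text \<open>The tails \<open>exp (\<beta> y)\<close> and \<open>exp (- \<gamma> (y - 1))\<close> with \<open>\<beta> = \<kappa> tan \<theta>\<close> and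
  \<open>\<gamma> = \<kappa> tan (\<kappa> - \<theta>)\<close> match the cosine to first order. They decay no faster than the true
  eigenfunction (\<open>\<beta> \<le> \<alpha>\<^sub>1\<close>, \<open>\<gamma> \<le> \<alpha>\<^sub>3\<close>), which makes them supersolutions.\<close>
lemma admissible_three_zone:
  assumes L: "0 < L" and \<kappa>: "\<kappa>\<^sup>2 = L\<^sup>2 * (r2 - \<nu>)"
    and \<theta>: "0 \<le> \<theta>" "\<theta> < pi / 2" "0 \<le> \<kappa> - \<theta>" "\<kappa> - \<theta> < pi / 2"
    and \<beta>: "(\<kappa> * tan \<theta>)\<^sup>2 \<le> L\<^sup>2 * (\<nu> - r1)" and \<gamma>: "(\<kappa> * tan (\<kappa> - \<theta>))\<^sup>2 \<le> L\<^sup>2 * (\<nu> - r3)"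
  shows "admissible L (mfun r1 r2 r3) (- \<nu>)"
proof -
  define \<beta> where "\<beta> = \<kappa> * tan \<theta>"
  define \<gamma> where "\<gamma> = \<kappa> * tan (\<kappa> - \<theta>)"
  have c0: "0 < cos \<theta>" and c1: "0 < cos (\<kappa> - \<theta>)"
    using \<theta> by (auto intro!: cos_gt_zero_pi)
  define f1 where "f1 = (\<lambda>x. cos \<theta> * exp (\<beta> * x))"
  define f1' where "f1' = (\<lambda>x. \<beta> * cos \<theta> * exp (\<beta> * x))"
  define f1'' where "f1'' = (\<lambda>x. \<beta>\<^sup>2 * cos \<theta> * exp (\<beta> * x))"
  define f2 where "f2 = (\<lambda>x. cos (\<kappa> * x - \<theta>))"
  define f2' where "f2' = (\<lambda>x. - \<kappa> * sin (\<kappa> * x - \<theta>))"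
  define f2'' where "f2'' = (\<lambda>x. - \<kappa>\<^sup>2 * cos (\<kappa> * x - \<theta>))"
  define f3 where "f3 = (\<lambda>x. cos (\<kappa> - \<theta>) * exp (- \<gamma> * (x - 1)))"
  define f3' where "f3' = (\<lambda>x. - \<gamma> * cos (\<kappa> - \<theta>) * exp (- \<gamma> * (x - 1)))"
  define f3'' where "f3'' = (\<lambda>x. \<gamma>\<^sup>2 * cos (\<kappa> - \<theta>) * exp (- \<gamma> * (x - 1)))"
  have W: "W21loc (glue3 f1 f2 f3) (glue3 f1' f2' f3') (glue3 f1'' f2'' f3'')"
  proof (rule W21loc_glue3)
    show "f1' 0 = f2' 0" "f2' 1 = f3' 1"
      using c0 c1 by (simp_all add: f1'_def f2'_def f3'_def \<beta>_def \<gamma>_def tan_def)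
  qed (auto simp: f1_def f1'_def f1''_def f2_def f2'_def f2''_def f3_def f3'_def f3''_def power2_eq_square
      intro!: derivative_eq_intros continuous_intros)
  have "0 < glue3 f1 f2 f3 x" for x
    using c0 c1 \<theta> cos_phase_pos[of \<kappa> \<theta> x] by (simp add: glue_def f1_def f2_def f3_def)
  moreover have "glue3 f1'' f2'' f3'' x \<le> - L\<^sup>2 * ((mfun r1 r2 r3 x + - \<nu>) * glue3 f1 f2 f3 x)" for x
  proof -
    have "\<beta>\<^sup>2 * f1 x \<le> L\<^sup>2 * (\<nu> - r1) * f1 x" "\<gamma>\<^sup>2 * f3 x \<le> L\<^sup>2 * (\<nu> - r3) * f3 x"
      using \<beta> \<gamma> c0 c1 by (auto simp: \<beta>_def \<gamma>_def f1_def f3_def intro!: mult_right_mono)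
    moreover have "f1'' x = \<beta>\<^sup>2 * f1 x" "f2'' x = - \<kappa>\<^sup>2 * f2 x" "f3'' x = \<gamma>\<^sup>2 * f3 x"
      by (simp_all add: f1_def f1''_def f2_def f2''_def f3_def f3''_def)
    ultimately show ?thesis
      by (simp add: glue_def mfun_def \<kappa> algebra_simps)
  qed
  ultimately show ?thesis
    unfolding admissible_def divide_square_add_nonpos_iff[OF L] using W by blast
qed

lemma exp_gt_of_ln_divide_less:
  fixes \<alpha> E x :: real
  assumes "0 < \<alpha>" and "0 < E" and "ln E / \<alpha> < x"
  shows "E < exp (\<alpha> * x)"
proof -
  have "ln E < x * \<alpha>"
    using pos_divide_less_eq[OF assms(1)] assms(3) by blast
  then have "ln E < \<alpha> * x"
    by (simp add: mult.commute)
  then show ?thesis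
    using assms(2) by (metis exp_less_mono exp_ln)
qed

lemma dirichlet_subsolution_glue3:
  assumes d: "\<And>x. (f1 has_real_derivative f1' x) (at x)" "\<And>x. (f1' has_real_derivative f1'' x) (at x)"
    "\<And>x. (f2 has_real_derivative f2' x) (at x)" "\<And>x. (f2' has_real_derivative f2'' x) (at x)"
    "\<And>x. (f3 has_real_derivative f3' x) (at x)" "\<And>x. (f3' has_real_derivative f3'' x) (at x)"
    and match: "f1 0 = f2 0" "f1' 0 = f2' 0" "f2 1 = f3 1" "f2' 1 = f3' 1"
    and ab: "a < 0" "1 < b" and ends: "f1 a = 0" "f3 b = 0"
    and pos: "\<And>x. a < x \<Longrightarrow> x < b \<Longrightarrow> 0 < glue3 f1 f2 f3 x"
    and ineq: "\<And>x. a < x \<Longrightarrow> x < b \<Longrightarrow> 0 \<le> glue3 f1'' f2'' f3'' x / L\<^sup>2 + (m x + \<rho>) * glue3 f1 f2 f3 x"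
  shows "dirichlet_subsolution L m \<rho> a b (glue3 f1 f2 f3) (glue3 f1' f2' f3') (glue3 f1'' f2'' f3'')"
proof -
  have \<psi>d: "(glue3 f1 f2 f3 has_real_derivative glue3 f1' f2' f3' x) (at x)" for x
    by (rule has_real_derivative_glue[OF d(1) has_real_derivative_glue[OF d(3,5) match(3,4)]])
      (use match in \<open>simp_all add: glue_def\<close>)
  have "(glue3 f1' f2' f3' has_real_derivative glue3 f1'' f2'' f3'' x) (at x within {x..})" for x
    using has_field_derivative_at_within[OF d(2)] has_field_derivative_at_within[OF d(4)]
      has_field_derivative_at_within[OF d(6)]
    by (intro has_real_derivative_glue_right)
  moreover have "continuous_on {a..b} (glue3 f1 f2 f3)"
    using \<psi>d by (meson DERIV_isCont continuous_at_imp_continuous_on)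
  ultimately show ?thesis
    unfolding dirichlet_subsolution_def using \<psi>d ab ends pos ineq by (simp add: glue_def)
qed

lemma exp_tail_matching:
  assumes \<alpha>: "0 < \<alpha>" and \<theta>: "0 < \<theta>" "\<theta> < pi / 2" and p: "\<alpha> < \<kappa> * tan \<theta>"
  shows "\<exists>c E. 0 < c \<and> 0 < E \<and> E < 1 \<and> c * (1 - E) = cos \<theta> \<and> c * \<alpha> = \<kappa> * sin \<theta>"
proof -
  have "0 < sin \<theta>" "0 < cos \<theta>"
    using \<theta> by (auto intro!: sin_gt_zero cos_gt_zero_pi)
  moreover have "0 < \<kappa> * tan \<theta>"
    using \<alpha> p by linarith
  ultimately show ?thesis
    using \<alpha> p by (intro exI[of _ "\<kappa> * sin \<theta> / \<alpha>"] exI[of _ "1 - \<alpha> / (\<kappa> * tan \<theta>)"])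
      (auto simp: field_simps tan_def zero_less_mult_iff)
qed

text \<open>Here the tails are exponentials lowered by \<open>E1\<close>, \<open>E3\<close> so that they vanish at some
  \<open>a < 0\<close> and \<open>b > 1\<close>; lowering only helps a subsolution. First-order matching with the
  cosine is possible because \<open>\<kappa> tan \<theta> > \<alpha>\<^sub>1\<close> and \<open>\<kappa> tan (\<kappa> - \<theta>) > \<alpha>\<^sub>3\<close>.\<close>
lemma dirichlet_subsolution_three_zone:
  assumes L: "0 < L" and \<kappa>: "\<kappa>\<^sup>2 = L\<^sup>2 * (r2 - \<nu>)"
    and \<alpha>1: "0 < \<alpha>1" "\<alpha>1\<^sup>2 = L\<^sup>2 * (\<nu> - r1)" and \<alpha>3: "0 < \<alpha>3" "\<alpha>3\<^sup>2 = L\<^sup>2 * (\<nu> - r3)"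
    and \<theta>: "0 < \<theta>" "\<theta> < pi / 2" "0 < \<kappa> - \<theta>" "\<kappa> - \<theta> < pi / 2"
    and p: "\<alpha>1 < \<kappa> * tan \<theta>" and q: "\<alpha>3 < \<kappa> * tan (\<kappa> - \<theta>)"
  shows "\<exists>a b \<psi> \<psi>' \<psi>''. dirichlet_subsolution L (mfun r1 r2 r3) (- \<nu>) a b \<psi> \<psi>' \<psi>''"
proof -
  obtain c1 E1 where c1: "0 < c1" "0 < E1" "E1 < 1" "c1 * (1 - E1) = cos \<theta>" "c1 * \<alpha>1 = \<kappa> * sin \<theta>"
    using exp_tail_matching[OF \<alpha>1(1) \<theta>(1,2) p] by blast
  obtain c3 E3 where c3: "0 < c3" "0 < E3" "E3 < 1" "c3 * (1 - E3) = cos (\<kappa> - \<theta>)"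
      "c3 * \<alpha>3 = \<kappa> * sin (\<kappa> - \<theta>)"
    using exp_tail_matching[OF \<alpha>3(1) \<theta>(3,4) q] by blast
  define f1 where "f1 = (\<lambda>x. c1 * (exp (\<alpha>1 * x) - E1))"
  define f1' where "f1' = (\<lambda>x. c1 * \<alpha>1 * exp (\<alpha>1 * x))"
  define f1'' where "f1'' = (\<lambda>x. c1 * \<alpha>1\<^sup>2 * exp (\<alpha>1 * x))"
  define f2 where "f2 = (\<lambda>x. cos (\<kappa> * x - \<theta>))"
  define f2' where "f2' = (\<lambda>x. - \<kappa> * sin (\<kappa> * x - \<theta>))"
  define f2'' where "f2'' = (\<lambda>x. - \<kappa>\<^sup>2 * cos (\<kappa> * x - \<theta>))"
  define f3 where "f3 = (\<lambda>x. c3 * (exp (- \<alpha>3 * (x - 1)) - E3))"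
  define f3' where "f3' = (\<lambda>x. - c3 * \<alpha>3 * exp (- \<alpha>3 * (x - 1)))"
  define f3'' where "f3'' = (\<lambda>x. c3 * \<alpha>3\<^sup>2 * exp (- \<alpha>3 * (x - 1)))"
  note f_defs = f1_def f1'_def f1''_def f2_def f2'_def f2''_def f3_def f3'_def f3''_def
  have d: "\<And>x. (f1 has_real_derivative f1' x) (at x)" "\<And>x. (f1' has_real_derivative f1'' x) (at x)"
    "\<And>x. (f2 has_real_derivative f2' x) (at x)" "\<And>x. (f2' has_real_derivative f2'' x) (at x)"
    "\<And>x. (f3 has_real_derivative f3' x) (at x)" "\<And>x. (f3' has_real_derivative f3'' x) (at x)"
    unfolding f_defs by (auto intro!: derivative_eq_intros simp: power2_eq_square)
  have match: "f1 0 = f2 0" "f1' 0 = f2' 0" "f2 1 = f3 1" "f2' 1 = f3' 1"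
    using c1 c3 by (simp_all add: f_defs algebra_simps)
  define a where "a = ln E1 / \<alpha>1"
  define b where "b = 1 - ln E3 / \<alpha>3"
  have ab: "a < 0" "1 < b"
    using c1 c3 \<alpha>1 \<alpha>3 by (simp_all add: a_def b_def divide_neg_pos ln_less_zero)
  have pos: "0 < glue3 f1 f2 f3 x" if "a < x" "x < b" for x
  proof -
    have "E1 < exp (\<alpha>1 * x)" "E3 < exp (\<alpha>3 * (1 - x))"
      using that c1 c3 \<alpha>1 \<alpha>3 by (auto simp: a_def b_def intro!: exp_gt_of_ln_divide_less)
    then show ?thesis
      using c1 c3 \<theta> cos_phase_pos[of \<kappa> \<theta> x] by (simp add: glue_def f_defs algebra_simps)
  qed
  have "- L\<^sup>2 * ((mfun r1 r2 r3 x + - \<nu>) * glue3 f1 f2 f3 x) \<le> glue3 f1'' f2'' f3'' x" for x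
  proof -
    have "\<alpha>1\<^sup>2 * f1 x \<le> f1'' x" "\<alpha>3\<^sup>2 * f3 x \<le> f3'' x"
      using c1 c3 by (simp_all add: f_defs algebra_simps)
    moreover have "f2'' x = - \<kappa>\<^sup>2 * f2 x"
      by (simp add: f_defs)
    ultimately show ?thesis
      by (simp add: glue_def mfun_def \<kappa> \<alpha>1 \<alpha>3 algebra_simps)
  qed
  moreover have "f1 a = 0" "f3 b = 0"
    using c1 c3 \<alpha>1 \<alpha>3 by (simp_all add: f1_def f3_def a_def b_def)
  ultimately have "dirichlet_subsolution L (mfun r1 r2 r3) (- \<nu>) a b
      (glue3 f1 f2 f3) (glue3 f1' f2' f3') (glue3 f1'' f2'' f3'')"
    using d match ab pos by (intro dirichlet_subsolution_glue3) (simp_all add: divide_square_add_nonneg_iff[OF L])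
  then show ?thesis by blast
qed

section \<open>The secular function\<close>

text \<open>With \<open>\<kappa> = L \<surd>(r2 - \<nu>)\<close> and \<open>\<alpha>\<^sub>i = L \<surd>(\<nu> - r\<^sub>i)\<close>, an eigenfunction for \<open>- \<nu>\<close> is
  \<open>cos (\<kappa> y - \<theta>)\<close> on \<open>[0, 1]\<close>, glued \<open>C\<^sup>1\<close> to \<open>exp (\<alpha>\<^sub>1 y)\<close> and \<open>exp (- \<alpha>\<^sub>3 (y - 1))\<close>.
  Matching logarithmic derivatives forces \<open>\<theta> = arctan (\<alpha>\<^sub>1 / \<kappa>)\<close> and
  \<open>\<kappa> - \<theta> = arctan (\<alpha>\<^sub>3 / \<kappa>)\<close>, i.e. \<open>secular L r1 r3 r2 \<nu> = 0\<close>.\<close>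
definition secular :: "real \<Rightarrow> real \<Rightarrow> real \<Rightarrow> real \<Rightarrow> real \<Rightarrow> real" where
  "secular L r1 r3 r2 \<nu> = L * sqrt (r2 - \<nu>)
     - arctan (sqrt ((\<nu> - r1) / (r2 - \<nu>))) - arctan (sqrt ((\<nu> - r3) / (r2 - \<nu>)))"

lemma sqrt_mult_sqrt_ratio:
  assumes "\<nu> < r2"
  shows "sqrt (r2 - \<nu>) * sqrt ((\<nu> - r) / (r2 - \<nu>)) = sqrt (\<nu> - r)"
  using assms by (simp add: real_sqrt_divide)

lemma square_tan_le_of_le_arctan:
  assumes L: "0 < L" and \<nu>: "r \<le> \<nu>" "\<nu> < r2"
    and \<theta>: "0 \<le> \<theta>" "\<theta> \<le> arctan (sqrt ((\<nu> - r) / (r2 - \<nu>)))"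
  shows "(L * sqrt (r2 - \<nu>) * tan \<theta>)\<^sup>2 \<le> L\<^sup>2 * (\<nu> - r)"
proof -
  have "\<theta> < pi / 2"
    using \<theta>(2) arctan_ubound by (rule order.strict_trans1)
  have "- (pi / 2) < \<theta>"
    using \<theta>(1) pi_gt_zero by linarith
  have "tan 0 \<le> tan \<theta>"
    by (rule tan_mono_le) (use \<theta> \<open>\<theta> < pi / 2\<close> in auto)
  moreover have "tan \<theta> \<le> tan (arctan (sqrt ((\<nu> - r) / (r2 - \<nu>))))"
    by (rule tan_mono_le[OF \<open>- (pi / 2) < \<theta>\<close> \<theta>(2) arctan_ubound])
  ultimately have "0 \<le> tan \<theta>" "tan \<theta> \<le> sqrt ((\<nu> - r) / (r2 - \<nu>))"
    by (simp_all add: tan_arctan)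
  then have "sqrt (r2 - \<nu>) * tan \<theta> \<le> sqrt (r2 - \<nu>) * sqrt ((\<nu> - r) / (r2 - \<nu>))"
    using \<nu> by (intro mult_left_mono) auto
  then have "sqrt (r2 - \<nu>) * tan \<theta> \<le> sqrt (\<nu> - r)"
    using sqrt_mult_sqrt_ratio[OF \<nu>(2)] by simp
  then have "L * sqrt (r2 - \<nu>) * tan \<theta> \<le> L * sqrt (\<nu> - r)"
    using mult_left_mono[OF _ less_imp_le[OF L]] by (simp add: mult.assoc)
  moreover have "0 \<le> L * sqrt (r2 - \<nu>) * tan \<theta>"
    using L \<nu> \<open>0 \<le> tan \<theta>\<close> by simp
  ultimately have "(L * sqrt (r2 - \<nu>) * tan \<theta>)\<^sup>2 \<le> (L * sqrt (\<nu> - r))\<^sup>2"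
    by (intro power_mono)
  then show ?thesis
    using \<nu> by (simp add: power_mult_distrib)
qed

lemma sqrt_less_tan_of_arctan_less:
  assumes L: "0 < L" and "\<nu> < r2"
    and \<theta>: "arctan (sqrt ((\<nu> - r) / (r2 - \<nu>))) < \<theta>" "\<theta> < pi / 2"
  shows "L * sqrt (\<nu> - r) < L * sqrt (r2 - \<nu>) * tan \<theta>"
proof -
  have "sqrt ((\<nu> - r) / (r2 - \<nu>)) < tan \<theta>"
    using tan_monotone[OF arctan_lbound \<theta>] by (simp add: tan_arctan)
  then have "sqrt (r2 - \<nu>) * sqrt ((\<nu> - r) / (r2 - \<nu>)) < sqrt (r2 - \<nu>) * tan \<theta>"
    using assms(2) by (intro mult_strict_left_mono) auto
  then have "sqrt (\<nu> - r) < sqrt (r2 - \<nu>) * tan \<theta>"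
    using sqrt_mult_sqrt_ratio[OF assms(2)] by simp
  then show ?thesis
    using mult_strict_left_mono[OF _ L] by (simp add: mult.assoc)
qed

lemma admissible_of_secular_nonpos:
  assumes L: "0 < L" and \<nu>: "r1 \<le> \<nu>" "r3 \<le> \<nu>" "\<nu> < r2" and sec: "secular L r1 r3 r2 \<nu> \<le> 0"
  shows "admissible L (mfun r1 r2 r3) (- \<nu>)"
proof -
  define \<kappa> where "\<kappa> = L * sqrt (r2 - \<nu>)"
  define A1 where "A1 = arctan (sqrt ((\<nu> - r1) / (r2 - \<nu>)))"
  define A3 where "A3 = arctan (sqrt ((\<nu> - r3) / (r2 - \<nu>)))"
  define \<theta> where "\<theta> = max 0 (\<kappa> - A3)"
  have "A1 < pi / 2" "A3 < pi / 2"
    unfolding A1_def A3_def by (rule arctan_ubound)+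
  moreover have "0 \<le> A1" "0 \<le> A3"
    using \<nu> by (simp_all add: A1_def A3_def)
  moreover have "\<kappa> \<le> A1 + A3"
    using sec by (simp add: \<kappa>_def A1_def A3_def secular_def)
  ultimately have \<theta>: "0 \<le> \<theta>" "\<theta> \<le> A1" "0 \<le> \<kappa> - \<theta>" "\<kappa> - \<theta> \<le> A3" "A1 < pi / 2" "A3 < pi / 2"
    using L \<nu> by (auto simp: \<theta>_def \<kappa>_def)
  show ?thesis
  proof (rule admissible_three_zone[OF L, of \<kappa> r2 \<nu> \<theta>])
    show "\<kappa>\<^sup>2 = L\<^sup>2 * (r2 - \<nu>)"
      using \<nu> by (simp add: \<kappa>_def power_mult_distrib)
    show "(\<kappa> * tan \<theta>)\<^sup>2 \<le> L\<^sup>2 * (\<nu> - r1)" "(\<kappa> * tan (\<kappa> - \<theta>))\<^sup>2 \<le> L\<^sup>2 * (\<nu> - r3)"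
      using square_tan_le_of_le_arctan[OF L \<nu>(1,3), of \<theta>] square_tan_le_of_le_arctan[OF L \<nu>(2,3), of "\<kappa> - \<theta>"] \<theta>
      unfolding \<kappa>_def[symmetric] A1_def[symmetric] A3_def[symmetric] by simp_all
    show "0 \<le> \<theta>" "\<theta> < pi / 2" "0 \<le> \<kappa> - \<theta>" "\<kappa> - \<theta> < pi / 2"
      using \<theta> by linarith+
  qed
qed

lemma exists_phase_split:
  fixes A1 A3 \<kappa> :: real
  assumes "A1 < pi / 2" and "A3 < pi / 2" and "A1 + A3 < \<kappa>" and "\<kappa> < pi"
  shows "\<exists>\<theta>. A1 < \<theta> \<and> \<theta> < pi / 2 \<and> A3 < \<kappa> - \<theta> \<and> \<kappa> - \<theta> < pi / 2"
proof -
  define lo where "lo = max A1 (\<kappa> - pi / 2)"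
  define hi where "hi = min (pi / 2) (\<kappa> - A3)"
  have "lo < hi"
    using assms unfolding lo_def hi_def max_less_iff_conj min_less_iff_conj by (intro conjI; linarith)
  then have "lo < (lo + hi) / 2" "(lo + hi) / 2 < hi"
    by (simp_all add: field_simps)
  moreover have "A1 \<le> lo" "\<kappa> - pi / 2 \<le> lo" "hi \<le> pi / 2" "hi \<le> \<kappa> - A3"
    unfolding lo_def hi_def by (rule max.cobounded1 max.cobounded2 min.cobounded1 min.cobounded2)+
  ultimately show ?thesis
    by (intro exI[of _ "(lo + hi) / 2"] conjI) linarith+
qed

lemma admissible_le_of_secular_pos:
  assumes adm: "admissible L (mfun r1 r2 r3) lam" and L: "0 < L"
    and \<nu>: "r1 < \<nu>" "r3 < \<nu>" "\<nu> < r2" and sec: "0 < secular L r1 r3 r2 \<nu>"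
  shows "lam \<le> - \<nu>"
proof (cases "pi \<le> L * sqrt (r2 - \<nu>)")
  case True
  then have "(pi / L)\<^sup>2 \<le> r2 - \<nu>"
    using L \<nu> power_mono[OF True, of 2] by (simp add: power_divide power_mult_distrib field_simps)
  then show ?thesis
    using admissible_mfun_le_middle[OF adm L] by simp
next
  case False
  define \<kappa> where "\<kappa> = L * sqrt (r2 - \<nu>)"
  define A1 where "A1 = arctan (sqrt ((\<nu> - r1) / (r2 - \<nu>)))"
  define A3 where "A3 = arctan (sqrt ((\<nu> - r3) / (r2 - \<nu>)))"
  have "A1 < pi / 2" "A3 < pi / 2"
    unfolding A1_def A3_def by (rule arctan_ubound)+
  moreover have "0 < A1" "0 < A3"
    using \<nu> by (simp_all add: A1_def A3_def)
  moreover have "A1 + A3 < \<kappa>" "\<kappa> < pi"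
    using sec False by (simp_all add: \<kappa>_def A1_def A3_def secular_def)
  ultimately obtain \<theta> where \<theta>: "A1 < \<theta>" "\<theta> < pi / 2" "A3 < \<kappa> - \<theta>" "\<kappa> - \<theta> < pi / 2"
    using exists_phase_split by blast
  have "\<exists>a b \<psi> \<psi>' \<psi>''. dirichlet_subsolution L (mfun r1 r2 r3) (- \<nu>) a b \<psi> \<psi>' \<psi>''"
  proof (rule dirichlet_subsolution_three_zone[OF L])
    show "\<kappa>\<^sup>2 = L\<^sup>2 * (r2 - \<nu>)"
      using \<nu> by (simp add: \<kappa>_def power_mult_distrib)
    show "(L * sqrt (\<nu> - r1))\<^sup>2 = L\<^sup>2 * (\<nu> - r1)" "(L * sqrt (\<nu> - r3))\<^sup>2 = L\<^sup>2 * (\<nu> - r3)"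
      using \<nu> by (simp_all add: power_mult_distrib)
    show "L * sqrt (\<nu> - r1) < \<kappa> * tan \<theta>"
      using sqrt_less_tan_of_arctan_less[OF L \<nu>(3), of r1 \<theta>] \<theta>
      unfolding \<kappa>_def[symmetric] A1_def[symmetric] by simp
    show "L * sqrt (\<nu> - r3) < \<kappa> * tan (\<kappa> - \<theta>)"
      using sqrt_less_tan_of_arctan_less[OF L \<nu>(3), of r3 "\<kappa> - \<theta>"] \<theta>
      unfolding \<kappa>_def[symmetric] A3_def[symmetric] by simp
  qed (use \<theta> L \<nu> \<open>0 < A1\<close> \<open>0 < A3\<close> in auto)
  then show ?thesis
    using admissible_le_dirichlet_subsolution[OF adm L continuous_at_right_mfun] by blast
qed

lemma arctan_sqrt_ratio_mono:
  assumes "r \<le> \<nu>" "\<nu> \<le> \<nu>'" "\<nu>' < r2'" "r2' \<le> r2"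
  shows "arctan (sqrt ((\<nu> - r) / (r2 - \<nu>))) \<le> arctan (sqrt ((\<nu>' - r) / (r2' - \<nu>')))"
  using assms by (intro arctan_monotone' real_sqrt_le_mono frac_le) auto

lemma secular_strict_antimono:
  assumes "0 < L" "r1 \<le> \<nu>" "r3 \<le> \<nu>" "\<nu> < \<nu>'" "\<nu>' < r2"
  shows "secular L r1 r3 r2 \<nu>' < secular L r1 r3 r2 \<nu>"
proof -
  have "L * sqrt (r2 - \<nu>') < L * sqrt (r2 - \<nu>)"
    using assms by simp
  then show ?thesis
    using arctan_sqrt_ratio_mono[of r1 \<nu> \<nu>' r2 r2] arctan_sqrt_ratio_mono[of r3 \<nu> \<nu>' r2 r2] assms
    unfolding secular_def by linarith
qed

lemma secular_less_iff:
  assumes "0 < L" "max r1 r3 \<le> \<nu>" "max r1 r3 \<le> \<nu>'" "\<nu> < r2" "\<nu>' < r2"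
  shows "secular L r1 r3 r2 \<nu> < secular L r1 r3 r2 \<nu>' \<longleftrightarrow> \<nu>' < \<nu>"
  using secular_strict_antimono[of L r1 \<nu> r3 \<nu>' r2] secular_strict_antimono[of L r1 \<nu>' r3 \<nu> r2] assms
  by (cases \<nu> \<nu>' rule: linorder_cases) auto

lemma secular_strict_mono_r2:
  assumes "0 < L" "r1 \<le> \<nu>" "r3 \<le> \<nu>" "\<nu> < r2" "r2 < r2'"
  shows "secular L r1 r3 r2 \<nu> < secular L r1 r3 r2' \<nu>"
proof -
  have "L * sqrt (r2 - \<nu>) < L * sqrt (r2' - \<nu>)"
    using assms by simp
  then show ?thesis
    using arctan_sqrt_ratio_mono[of r1 \<nu> \<nu> r2 r2'] arctan_sqrt_ratio_mono[of r3 \<nu> \<nu> r2 r2'] assms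
    unfolding secular_def by linarith
qed

lemma continuous_on_secular: "b < r2 \<Longrightarrow> continuous_on {a..b} (secular L r1 r3 r2)"
  unfolding secular_def by (intro continuous_intros) auto

lemma isCont_secular_r2: "\<nu> < r2 \<Longrightarrow> isCont (\<lambda>r. secular L r1 r3 r \<nu>) r2"
  unfolding secular_def by (intro continuous_intros) auto

lemma secular_pos_of_large:
  assumes "pi \<le> L * sqrt (r2 - \<nu>)"
  shows "0 < secular L r1 r3 r2 \<nu>"
  using assms arctan_ubound[of "sqrt ((\<nu> - r1) / (r2 - \<nu>))"] arctan_ubound[of "sqrt ((\<nu> - r3) / (r2 - \<nu>))"]
  unfolding secular_def by linarith

text \<open>Close to \<open>r2\<close> the cosine phase \<open>\<kappa>\<close> tends to \<open>0\<close> while both arctangents tend to \<open>pi / 2\<close>.\<close>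
lemma secular_neg_near_r2:
  assumes L: "0 < L" and r2: "max r1 r3 < r2"
  shows "\<exists>\<nu>. max r1 r3 < \<nu> \<and> \<nu> < r2 \<and> secular L r1 r3 r2 \<nu> < 0"
proof -
  define s where "s = min ((r2 - max r1 r3) / 2) ((pi / (2 * L))\<^sup>2 / 2)"
  have "s \<le> (r2 - max r1 r3) / 2" "s \<le> (pi / (2 * L))\<^sup>2 / 2"
    unfolding s_def by (rule min.cobounded1 min.cobounded2)+
  moreover have "0 < s"
    using r2 L by (simp add: s_def)
  ultimately have s: "0 < s" "s \<le> (r2 - max r1 r3) / 2" "s < (pi / (2 * L))\<^sup>2"
    by simp_all
  define \<nu> where "\<nu> = r2 - s"
  have "sqrt s < pi / (2 * L)"
    using s(3) L by (intro real_less_lsqrt) simp_all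
  then have "L * sqrt s < L * (pi / (2 * L))"
    using L by (rule mult_strict_left_mono)
  then have "L * sqrt (r2 - \<nu>) < pi / 2"
    using L by (simp add: \<nu>_def)
  moreover have "pi / 4 \<le> arctan (sqrt ((\<nu> - r) / (r2 - \<nu>)))" if "r \<le> max r1 r3" for r
  proof -
    have "r2 - \<nu> \<le> \<nu> - r" "0 < r2 - \<nu>"
      using s that by (simp_all add: \<nu>_def)
    then have "1 \<le> (\<nu> - r) / (r2 - \<nu>)"
      by (simp add: le_divide_eq)
    then show ?thesis
      using arctan_monotone'[of 1] by (simp add: arctan_one)
  qed
  then have "pi / 4 \<le> arctan (sqrt ((\<nu> - r1) / (r2 - \<nu>)))" "pi / 4 \<le> arctan (sqrt ((\<nu> - r3) / (r2 - \<nu>)))"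
    by simp_all
  ultimately have "secular L r1 r3 r2 \<nu> < 0"
    unfolding secular_def by linarith
  moreover have "max r1 r3 < \<nu>" "\<nu> < r2"
    using s by (auto simp: \<nu>_def)
  ultimately show ?thesis by blast
qed

lemma secular_at_max:
  assumes r2: "max r1 r3 < r2"
  shows "secular L r1 r3 r2 (max r1 r3) = sqrt (r2 - max r1 r3) * (L - Lunder r1 r3 r2)"
proof -
  define M where "M = max r1 r3"
  have arcs: "secular L r1 r3 r2 M = L * sqrt (r2 - M) - arctan (sqrt (\<bar>r1 - r3\<bar> / (r2 - M)))"
    by (cases "r1 \<le> r3") (auto simp: secular_def M_def max_def abs_if)
  have "sqrt (r2 - M) * Lunder r1 r3 r2 = arctan (sqrt (\<bar>r1 - r3\<bar> / (r2 - M)))"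
  proof (cases "r1 = r3")
    case False
    define y where "y = sqrt ((r2 - M) / \<bar>r1 - r3\<bar>)"
    have "0 < y" using False r2 by (simp add: y_def M_def)
    then have "arccot y = arctan (1 / y)"
      using arctan_inverse[of y] by (simp add: arccot_def inverse_eq_divide)
    moreover have "1 / y = sqrt (\<bar>r1 - r3\<bar> / (r2 - M))"
      by (simp add: y_def real_sqrt_divide)
    ultimately show ?thesis
      using False r2 by (simp add: Lunder_def M_def y_def)
  qed (simp add: Lunder_def)
  then show ?thesis
    using arcs by (simp add: M_def algebra_simps)
qed

section \<open>The principal eigenvalue as a function of \<open>r2\<close>\<close>

definition nu1 :: "real \<Rightarrow> real \<Rightarrow> real \<Rightarrow> real \<Rightarrow> real" where
  "nu1 L r1 r3 r2 = (if secular L r1 r3 r2 (max r1 r3) \<le> 0 then max r1 r3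
     else THE \<nu>. max r1 r3 < \<nu> \<and> \<nu> < r2 \<and> secular L r1 r3 r2 \<nu> = 0)"

lemma ex1_secular_root:
  assumes L: "0 < L" and r2: "max r1 r3 < r2" and pos: "0 < secular L r1 r3 r2 (max r1 r3)"
  shows "\<exists>!\<nu>. max r1 r3 < \<nu> \<and> \<nu> < r2 \<and> secular L r1 r3 r2 \<nu> = 0"
proof -
  obtain \<nu>1 where \<nu>1: "max r1 r3 < \<nu>1" "\<nu>1 < r2" "secular L r1 r3 r2 \<nu>1 < 0"
    using secular_neg_near_r2[OF L r2] by blast
  obtain \<nu> where \<nu>: "max r1 r3 \<le> \<nu>" "\<nu> \<le> \<nu>1" "secular L r1 r3 r2 \<nu> = 0"
    using IVT2'[of "secular L r1 r3 r2" \<nu>1 0 "max r1 r3"] \<nu>1 pos continuous_on_secular[OF \<nu>1(2)] by auto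
  then have "max r1 r3 < \<nu>" "\<nu> < r2"
    using pos \<nu>1 by (auto simp: le_less)
  moreover have "\<nu>' = \<nu>" if "max r1 r3 < \<nu>'" "\<nu>' < r2" "secular L r1 r3 r2 \<nu>' = 0" for \<nu>'
    using secular_less_iff[OF L, of r1 r3 \<nu> \<nu>' r2] secular_less_iff[OF L, of r1 r3 \<nu>' \<nu> r2] that \<nu>
      \<open>\<nu> < r2\<close> by (cases \<nu> \<nu>' rule: linorder_cases) auto
  ultimately show ?thesis
    using \<nu>(3) by blast
qed

lemma nu1_root:
  assumes "0 < L" and "max r1 r3 < r2" and "0 < secular L r1 r3 r2 (max r1 r3)"
  shows "max r1 r3 < nu1 L r1 r3 r2 \<and> nu1 L r1 r3 r2 < r2 \<and> secular L r1 r3 r2 (nu1 L r1 r3 r2) = 0"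
  using theI'[OF ex1_secular_root[OF assms]] assms(3) by (simp add: nu1_def)

lemma nu1_bounds:
  assumes "0 < L" and "max r1 r3 < r2"
  shows "max r1 r3 \<le> nu1 L r1 r3 r2" "nu1 L r1 r3 r2 < r2" "secular L r1 r3 r2 (nu1 L r1 r3 r2) \<le> 0"
  using nu1_root[OF assms] assms(2) by (auto simp: nu1_def not_le)

lemma nu1_sign:
  assumes L: "0 < L" and r2: "max r1 r3 < r2" and \<nu>: "max r1 r3 < \<nu>" "\<nu> < r2"
  shows "0 < secular L r1 r3 r2 \<nu> \<longleftrightarrow> \<nu> < nu1 L r1 r3 r2"
    and "secular L r1 r3 r2 \<nu> < 0 \<longleftrightarrow> nu1 L r1 r3 r2 < \<nu>"
proof -
  have "(0 < secular L r1 r3 r2 \<nu> \<longleftrightarrow> \<nu> < nu1 L r1 r3 r2) \<and>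
      (secular L r1 r3 r2 \<nu> < 0 \<longleftrightarrow> nu1 L r1 r3 r2 < \<nu>)"
  proof (cases "secular L r1 r3 r2 (max r1 r3) \<le> 0")
    case True
    then show ?thesis
      using secular_strict_antimono[OF L max.cobounded1 max.cobounded2 \<nu>] \<nu> by (auto simp: nu1_def)
  next
    case False
    then have "max r1 r3 < nu1 L r1 r3 r2" "nu1 L r1 r3 r2 < r2" "secular L r1 r3 r2 (nu1 L r1 r3 r2) = 0"
      using nu1_root[OF L r2] by auto
    then show ?thesis
      using secular_less_iff[OF L, of r1 r3 \<nu> "nu1 L r1 r3 r2" r2]
        secular_less_iff[OF L, of r1 r3 "nu1 L r1 r3 r2" \<nu> r2] \<nu> by auto
  qed
  then show "0 < secular L r1 r3 r2 \<nu> \<longleftrightarrow> \<nu> < nu1 L r1 r3 r2"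
    and "secular L r1 r3 r2 \<nu> < 0 \<longleftrightarrow> nu1 L r1 r3 r2 < \<nu>"
    by blast+
qed

lemma lambda1_eq_neg_nu1:
  assumes L: "0 < L" and r2: "max r1 r3 < r2"
  shows "lambda1 L r1 r3 r2 = - nu1 L r1 r3 r2"
  unfolding lambda1_eq_Sup_admissible
proof (rule cSup_eq_maximum)
  show "- nu1 L r1 r3 r2 \<in> {lam. admissible L (mfun r1 r2 r3) lam}"
    using nu1_bounds[OF assms] by (auto intro: admissible_of_secular_nonpos[OF L])
  fix lam
  assume "lam \<in> {lam. admissible L (mfun r1 r2 r3) lam}"
  then have adm: "admissible L (mfun r1 r2 r3) lam" by simp
  show "lam \<le> - nu1 L r1 r3 r2"
  proof (cases "max r1 r3 < nu1 L r1 r3 r2")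
    case True
    have "\<nu> \<le> - lam" if "max r1 r3 < \<nu>" "\<nu> < nu1 L r1 r3 r2" for \<nu>
      using admissible_le_of_secular_pos[OF adm L] nu1_sign(1)[OF L r2] nu1_bounds(2)[OF L r2] that
      by force
    then show ?thesis
      using dense_le_bounded[OF True] by force
  qed (use admissible_mfun_le_neg_max[OF adm L] nu1_bounds[OF assms] in auto)
qed

lemma eventually_nu1_less:
  assumes L: "0 < L" and r0: "max r1 r3 < r0" and a: "nu1 L r1 r3 r0 < a"
  shows "eventually (\<lambda>r. nu1 L r1 r3 r < a) (at r0)"
proof -
  define m0 where "m0 = nu1 L r1 r3 r0"
  define \<nu> where "\<nu> = min a ((m0 + r0) / 2)"
  have m0: "max r1 r3 \<le> m0" "m0 < r0"
    using nu1_bounds[OF L r0] by (simp_all add: m0_def)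
  then have "m0 < (m0 + r0) / 2" "(m0 + r0) / 2 < r0"
    by (simp_all add: field_simps)
  then have \<nu>: "m0 < \<nu>" "\<nu> < r0" "\<nu> \<le> a"
    using a by (auto simp: \<nu>_def min_def m0_def)
  then have "secular L r1 r3 r0 \<nu> < 0"
    using nu1_sign(2)[OF L r0] m0 by (simp add: m0_def)
  then have "eventually (\<lambda>r. secular L r1 r3 r \<nu> < 0) (at r0)"
    using order_tendstoD(2)[OF isCont_secular_r2[OF \<nu>(2), unfolded isCont_def]] by blast
  then show ?thesis
    using order_tendstoD(1)[OF tendsto_ident_at \<nu>(2)]
  proof eventually_elim
    case (elim r)
    then show ?case
      using nu1_sign(2)[OF L, of r1 r3 r \<nu>] \<nu> m0 by auto
  qed
qed

lemma eventually_nu1_greater: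
  assumes L: "0 < L" and r0: "max r1 r3 < r0" and a: "a < nu1 L r1 r3 r0"
  shows "eventually (\<lambda>r. a < nu1 L r1 r3 r) (at r0)"
proof (cases "a < max r1 r3")
  case True
  have "eventually (\<lambda>r. max r1 r3 < r) (at r0)"
    using order_tendstoD(1)[OF tendsto_ident_at r0] .
  then show ?thesis
    by eventually_elim (use True nu1_bounds(1)[OF L] in fastforce)
next
  case False
  define \<nu> where "\<nu> = (a + nu1 L r1 r3 r0) / 2"
  have "a < \<nu>" "\<nu> < nu1 L r1 r3 r0"
    using a by (simp_all add: \<nu>_def field_simps)
  then have \<nu>: "max r1 r3 < \<nu>" "\<nu> < nu1 L r1 r3 r0" "\<nu> < r0" "a < \<nu>"
    using False nu1_bounds(2)[OF L r0] by linarith+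
  then have "0 < secular L r1 r3 r0 \<nu>"
    using nu1_sign(1)[OF L r0] by simp
  then have "eventually (\<lambda>r. 0 < secular L r1 r3 r \<nu>) (at r0)"
    using order_tendstoD(1)[OF isCont_secular_r2[OF \<nu>(3), unfolded isCont_def]] by blast
  then show ?thesis
    using order_tendstoD(1)[OF tendsto_ident_at \<nu>(3)]
  proof eventually_elim
    case (elim r)
    then show ?case
      using nu1_sign(1)[OF L, of r1 r3 r \<nu>] \<nu> by auto
  qed
qed

lemma isCont_nu1:
  assumes "0 < L" and "max r1 r3 < r0"
  shows "isCont (nu1 L r1 r3) r0"
  unfolding isCont_def
  by (rule order_tendstoI) (use eventually_nu1_less[OF assms] eventually_nu1_greater[OF assms] in auto)

lemma nu1_strict_mono:
  assumes L: "0 < L" and r: "max r1 r3 < r" "r < r'" and pos: "0 < secular L r1 r3 r (max r1 r3)"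
  shows "nu1 L r1 r3 r < nu1 L r1 r3 r'"
proof -
  have root: "max r1 r3 < nu1 L r1 r3 r" "nu1 L r1 r3 r < r" "secular L r1 r3 r (nu1 L r1 r3 r) = 0"
    using nu1_root[OF L r(1) pos] by auto
  then have "0 < secular L r1 r3 r' (nu1 L r1 r3 r)"
    using secular_strict_mono_r2[OF L _ _ _ r(2), of r1 "nu1 L r1 r3 r" r3] by simp
  then show ?thesis
    using nu1_sign(1)[OF L, of r1 r3 r' "nu1 L r1 r3 r"] root r by simp
qed

lemma filterlim_nu1_at_top:
  assumes L: "0 < L"
  shows "filterlim (nu1 L r1 r3) at_top at_top"
  unfolding filterlim_at_top
proof
  fix Z :: real
  define \<nu> where "\<nu> = max Z (max r1 r3) + 1"
  have large: "\<nu> < nu1 L r1 r3 r" if r: "\<nu> + (pi / L)\<^sup>2 + 1 \<le> r" for r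
  proof -
    have "pi / L \<le> sqrt (r - \<nu>)"
      using r by (intro real_le_rsqrt) simp
    then have "pi \<le> L * sqrt (r - \<nu>)"
      using L by (simp add: divide_le_eq mult.commute)
    moreover have \<nu>: "max r1 r3 < \<nu>" "\<nu> < r"
      using r zero_le_power2[of "pi / L"] unfolding \<nu>_def by linarith+
    moreover have "max r1 r3 < r"
      using \<nu> by linarith
    ultimately show ?thesis
      using nu1_sign(1)[OF L \<open>max r1 r3 < r\<close> \<nu>] secular_pos_of_large by blast
  qed
  have "Z \<le> \<nu>"
    by (simp add: \<nu>_def)
  then show "eventually (\<lambda>r. Z \<le> nu1 L r1 r3 r) at_top"
    unfolding eventually_at_top_linorder using large by (intro exI[of _ "\<nu> + (pi / L)\<^sup>2 + 1"]) force
qed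

lemma continuous_on_lambda1:
  assumes L: "0 < L"
  shows "continuous_on {max r1 r3<..} (lambda1 L r1 r3)"
proof -
  have "isCont (lambda1 L r1 r3) r0" if r0: "max r1 r3 < r0" for r0
  proof -
    have ev: "eventually (\<lambda>r. lambda1 L r1 r3 r = - nu1 L r1 r3 r) (nhds r0)"
      using eventually_nhds_in_open[of "{max r1 r3<..}" r0] r0
      by (auto elim!: eventually_mono intro: lambda1_eq_neg_nu1[OF L])
    show ?thesis
      using isCont_cong[OF ev] isCont_minus[OF isCont_nu1[OF L r0]] by simp
  qed
  then show ?thesis
    by (simp add: continuous_on_eq_continuous_at)
qed

lemma lambda1_tendsto_neg_max:
  assumes L: "0 < L"
  shows "(lambda1 L r1 r3 \<longlongrightarrow> - max r1 r3) (at_right (max r1 r3))"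
proof (rule tendsto_sandwich[of "\<lambda>r. - r" _ _ "\<lambda>_. - max r1 r3"])
  have "eventually (\<lambda>r. max r1 r3 < r) (at_right (max r1 r3))"
    by (rule eventually_at_right_less)
  then have "eventually (\<lambda>r. - r \<le> lambda1 L r1 r3 r \<and> lambda1 L r1 r3 r \<le> - max r1 r3)
      (at_right (max r1 r3))"
  proof eventually_elim
    case (elim r)
    then show ?case
      using lambda1_eq_neg_nu1[OF L elim] nu1_bounds(1,2)[OF L elim] by simp
  qed
  then show "eventually (\<lambda>r. - r \<le> lambda1 L r1 r3 r) (at_right (max r1 r3))"
    and "eventually (\<lambda>r. lambda1 L r1 r3 r \<le> - max r1 r3) (at_right (max r1 r3))"
    by (auto elim: eventually_mono)
qed (auto intro!: tendsto_eq_intros)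

lemma filterlim_lambda1_at_top:
  assumes L: "0 < L"
  shows "filterlim (lambda1 L r1 r3) at_bot at_top"
proof -
  have "eventually (\<lambda>r. - nu1 L r1 r3 r = lambda1 L r1 r3 r) at_top"
    using eventually_gt_at_top[of "max r1 r3"] by eventually_elim (simp add: lambda1_eq_neg_nu1[OF L])
  moreover have "filterlim (\<lambda>r. - nu1 L r1 r3 r) at_bot at_top"
    using filterlim_nu1_at_top[OF L] filterlim_uminus_at_top by blast
  ultimately show ?thesis
    using filterlim_cong[OF refl refl] by fastforce
qed

lemma secular_at_max_sign:
  assumes "max r1 r3 < r2"
  shows "0 < secular L r1 r3 r2 (max r1 r3) \<longleftrightarrow> Lunder r1 r3 r2 < L"
    and "secular L r1 r3 r2 (max r1 r3) < 0 \<longleftrightarrow> L < Lunder r1 r3 r2"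
  using assms by (simp_all add: secular_at_max zero_less_mult_iff mult_less_0_iff less_max_iff_disj)

lemma lambda1_eq_neg_max:
  assumes "0 < L" and "max r1 r3 < r" and "secular L r1 r3 r (max r1 r3) \<le> 0"
  shows "lambda1 L r1 r3 r = - max r1 r3"
  using lambda1_eq_neg_nu1[OF assms(1,2)] assms(3) by (simp add: nu1_def)

lemma lambda1_strict_antimono:
  assumes L: "0 < L" and r: "max r1 r3 < r" "r < r'" and "0 < secular L r1 r3 r (max r1 r3)"
  shows "lambda1 L r1 r3 r' < lambda1 L r1 r3 r"
  using nu1_strict_mono[OF assms] lambda1_eq_neg_nu1[OF L r(1)] lambda1_eq_neg_nu1[OF L, of r1 r3 r'] r
  by simp

lemma secular_at_max_nonpos_upto:
  assumes neg: "\<And>s. max r1 r3 < s \<Longrightarrow> s < b \<Longrightarrow> secular L r1 r3 s (max r1 r3) < 0"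
    and r: "r \<in> {max r1 r3<..b}"
  shows "secular L r1 r3 r (max r1 r3) \<le> 0"
proof (cases "r < b")
  case True
  then show ?thesis using neg r by (simp add: less_imp_le)
next
  case False
  then have "r = b" using r by simp
  have "((\<lambda>s. secular L r1 r3 s (max r1 r3)) \<longlongrightarrow> secular L r1 r3 r (max r1 r3)) (at_left r)"
    using isCont_secular_r2[of "max r1 r3" r] r by (simp add: isCont_def filterlim_at_split)
  moreover have "eventually (\<lambda>s. max r1 r3 < s \<and> s < r) (at_left r)"
    using r by (auto simp: eventually_at_left_field intro!: exI[of _ "max r1 r3"])
  then have "eventually (\<lambda>s. secular L r1 r3 s (max r1 r3) \<le> 0) (at_left r)"
    by eventually_elim (use neg \<open>r = b\<close> in \<open>auto intro: less_imp_le\<close>)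
  ultimately show ?thesis
    by (rule tendsto_upperbound) simp
qed

theorem proposition4p2:
  fixes r1 r3 L r2bar :: real
  assumes "r1 > 0" and "r3 > 0" and "L > 0"
    and "r2bar \<ge> max r1 r3"
    and "\<forall>r2. r2 > r2bar \<longrightarrow> L > Lunder r1 r3 r2"
    and "\<forall>r2. max r1 r3 < r2 \<and> r2 < r2bar \<longrightarrow> L < Lunder r1 r3 r2"
  shows "continuous_on {max r1 r3<..} (lambda1 L r1 r3)
    \<and> (\<forall>x\<in>{max r1 r3<..r2bar}. \<forall>y\<in>{max r1 r3<..r2bar}. lambda1 L r1 r3 x = lambda1 L r1 r3 y)
    \<and> (\<forall>x\<in>{r2bar<..}. \<forall>y\<in>{r2bar<..}. x < y \<longrightarrow> lambda1 L r1 r3 y < lambda1 L r1 r3 x)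
    \<and> (lambda1 L r1 r3 \<longlongrightarrow> - max r1 r3) (at_right (max r1 r3))
    \<and> filterlim (lambda1 L r1 r3) at_bot at_top"
proof -
  note L = \<open>L > 0\<close>
  have above: "0 < secular L r1 r3 r (max r1 r3)" if "r2bar < r" for r
    using secular_at_max_sign(1)[of r1 r3 r L] assms(4,5) that by auto
  have left: "secular L r1 r3 r (max r1 r3) < 0" if "max r1 r3 < r" "r < r2bar" for r
    using secular_at_max_sign(2)[of r1 r3 r L] assms(6) that by auto
  have const: "lambda1 L r1 r3 r = - max r1 r3" if r: "r \<in> {max r1 r3<..r2bar}" for r
    using lambda1_eq_neg_max[OF L _ secular_at_max_nonpos_upto[OF left r]] r by simp
  show ?thesis
  proof (intro conjI ballI impI)
    fix x y
    assume "x \<in> {r2bar<..}" "y \<in> {r2bar<..}" "x < y"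
    then show "lambda1 L r1 r3 y < lambda1 L r1 r3 x"
      using lambda1_strict_antimono[OF L _ _ above] assms(4) by simp
  qed (simp_all add: const continuous_on_lambda1[OF L] lambda1_tendsto_neg_max[OF L]
      filterlim_lambda1_at_top[OF L])
qed

end
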